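(* Let $X$ be a finite-dimensional real Hilbert space and $A,B$ closed convex subsets of $X$ with $\operatorname{ri}A\cap\operatorname{ri}B\ne\varnothing$. Let $L=\operatorname{aff}(A\cup B)$ and $T=P_BR_A+\mathrm{Id}-P_A$. Then for every $\rho>0$ there exists $\kappa>0$ such that $\|x-Tx\|\ge\kappa\,d_{A\cap B}(x)$ for all $x\in L$ with $\|x\|\le\rho$.
   Context: $P_S$ is the metric projection onto a closed convex set $S$, $R_S=2P_S-\mathrm{Id}$, $d_S$ the distance function, $\operatorname{aff}$ the affine hull, $\operatorname{ri}$ the relative interior. *)

theory Defs
  imports "HOL-Analysis.Analysis"
begin

text \<open>Metric projection P_S is the library's closest_point S; reflector R_S = 2 P_S - Id.\<close>
definition reflector :: "'a::euclidean_space set \<Rightarrow> 'a \<Rightarrow> 'a" where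
  "reflector S x = 2 *\<^sub>R closest_point S x - x"

definition drT :: "'a::euclidean_space set \<Rightarrow> 'a set \<Rightarrow> 'a \<Rightarrow> 'a" where
  "drT A B x = closest_point B (reflector A x) + x - closest_point A x"

end

theory Submission imports Defs begin

(* Translating by a common relative interior point c we may assume that both A and B contain
   a ball of some radius r > 0 of their linear spans (contains_span_ball); then L = span (A \<union> B).
   Two quantitative facts drive the estimate, both using a bounded splitting of
   span (A \<union> B) = span A + span B (bounded_splitting, any finite-dimensional sum splits boundedly):
   - near_intersection_point: a point a \<in> A with b \<in> B nearby is close to A \<inter> B;
   - distance_to_first_set_bound: with a = P_A x and b = P_B (R_A x), the normal-cone
     inequalities at a and b bound |x - a| by a multiple of |a - b| = |x - T x|. *)

definition bounded_splitting :: "'a::euclidean_space set \<Rightarrow> 'a set \<Rightarrow> real \<Rightarrow> bool" where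
  "bounded_splitting S T K \<longleftrightarrow> K > 0 \<and>
     (\<forall>v\<in>span (S \<union> T). \<exists>p\<in>span S. \<exists>q\<in>span T. v = p + q \<and> norm p \<le> K * norm v \<and> norm q \<le> K * norm v)"

(* The sum span S + span T = span (S \<union> T) admits a linear choice of the span S-component:
   choose it on a basis of span (S \<union> T) and extend linearly. *)
lemma linear_splitting_exists:
  fixes S T :: "'a::euclidean_space set"
  obtains g where "linear g" "\<And>v. v \<in> span (S \<union> T) \<Longrightarrow> g v \<in> span S \<and> v - g v \<in> span T"
proof -
  obtain C where C: "C \<subseteq> span (S \<union> T)" "independent C" "span (S \<union> T) \<subseteq> span C"
    by (rule maximal_independent_subset)
  have "\<forall>c\<in>C. \<exists>p. p \<in> span S \<and> c - p \<in> span T"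
  proof
    fix c assume "c \<in> C"
    then obtain p q where "p \<in> span S" "q \<in> span T" "c = p + q"
      using C(1) unfolding span_Un by blast
    then show "\<exists>p. p \<in> span S \<and> c - p \<in> span T" by auto
  qed
  then obtain f where f: "\<And>c. c \<in> C \<Longrightarrow> f c \<in> span S \<and> c - f c \<in> span T" by metis
  obtain g where g: "linear g" "\<And>c. c \<in> C \<Longrightarrow> g c = f c"
    using linear_independent_extend[OF C(2)] by blast
  let ?G = "{v. g v \<in> span S \<and> v - g v \<in> span T}"
  have "linear (\<lambda>v. v - g v)"
    using linear_compose_sub[OF linear_id g(1)] by (simp add: id_def)
  then have "subspace (g -` span S \<inter> (\<lambda>v. v - g v) -` span T)"
    using g(1) by (intro subspace_inter linear_subspace_vimage subspace_span)
  also have "g -` span S \<inter> (\<lambda>v. v - g v) -` span T = ?G" by auto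
  finally have "subspace ?G" .
  have "C \<subseteq> ?G" using f g(2) by auto
  then have "span C \<subseteq> ?G" using \<open>subspace ?G\<close> by (rule span_minimal)
  then show ?thesis using that g(1) C(3) by auto
qed

(* In finite dimensions a bounded splitting always exists, since linear maps are bounded. *)
lemma bounded_splitting_exists:
  fixes S T :: "'a::euclidean_space set"
  shows "\<exists>K. bounded_splitting S T K"
proof -
  obtain g where g: "linear g" "\<And>v. v \<in> span (S \<union> T) \<Longrightarrow> g v \<in> span S \<and> v - g v \<in> span T"
    using linear_splitting_exists[of S T] by blast
  obtain M where M: "M > 0" "\<And>x. norm (g x) \<le> M * norm x"
    using linear_bounded_pos[OF g(1)] by blast
  have "bounded_splitting S T (M + 1)"
    unfolding bounded_splitting_def
  proof (intro conjI ballI)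
    fix v assume v: "v \<in> span (S \<union> T)"
    have "(M + 1) * norm v = M * norm v + norm v" by (simp add: algebra_simps)
    then have "norm (g v) \<le> (M + 1) * norm v" "norm (v - g v) \<le> (M + 1) * norm v"
      using M(2)[of v] norm_ge_zero[of v] norm_triangle_ineq4[of v "g v"] by linarith+
    with g(2)[OF v] show "\<exists>p\<in>span S. \<exists>q\<in>span T. v = p + q \<and>
        norm p \<le> (M + 1) * norm v \<and> norm q \<le> (M + 1) * norm v"
      by (intro bexI[of _ "g v"] bexI[of _ "v - g v"]) auto
  qed (use M in simp)
  then show ?thesis ..
qed

(* S contains the closed ball of radius r (centred at 0) of its own linear span, i.e. 0 is a
   relative interior point of S with room r. *)
definition contains_span_ball :: "real \<Rightarrow> 'a::euclidean_space set \<Rightarrow> bool" where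
  "contains_span_ball r S \<longleftrightarrow> (\<forall>s\<in>span S. norm s \<le> r \<longrightarrow> s \<in> S)"

lemma contains_span_ballD:
  "contains_span_ball r S \<Longrightarrow> s \<in> span S \<Longrightarrow> norm s \<le> r \<Longrightarrow> s \<in> S"
  unfolding contains_span_ball_def by blast

lemma contains_span_ball_zero: "contains_span_ball r S \<Longrightarrow> 0 \<le> r \<Longrightarrow> 0 \<in> S"
  using contains_span_ballD[of r S 0] by (simp add: span_zero)

lemma contains_span_ball_mono:
  "contains_span_ball r S \<Longrightarrow> r' \<le> r \<Longrightarrow> contains_span_ball r' S"
  unfolding contains_span_ball_def by force

lemma convex_span_ball_shift:
  fixes S :: "'a::euclidean_space set"
  assumes "convex S" "contains_span_ball r S" "r > 0" "a \<in> S"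
    and "w \<in> span S" "0 \<le> \<mu>" "\<mu> \<le> 1" "norm w \<le> \<mu> * r"
  shows "(1 - \<mu>) *\<^sub>R a + w \<in> S"
proof (cases "\<mu> = 0")
  case True
  then show ?thesis using assms(4,8) by simp
next
  case False
  then have \<mu>: "\<mu> > 0" using assms(6) by simp
  have "(1 / \<mu>) *\<^sub>R w \<in> S"
    using assms(5,8) \<mu> by (intro contains_span_ballD[OF assms(2)]) (auto simp: span_scale field_simps)
  then have "(1 - \<mu>) *\<^sub>R a + \<mu> *\<^sub>R ((1 / \<mu>) *\<^sub>R w) \<in> S"
    using convexD_alt[OF assms(1,4)] assms(6,7) by blast
  then show ?thesis using \<mu> by simp
qed

(* If w lies in the normal cone of S at p, testing with the points of the r-span-ball gives
   w \<bullet> v \<le> |v| / r * (w \<bullet> p) for all v \<in> span S. *)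
lemma normal_cone_span_bound:
  fixes S :: "'a::euclidean_space set"
  assumes S: "contains_span_ball r S" "r > 0" and p: "p \<in> S"
    and normal: "\<And>s. s \<in> S \<Longrightarrow> inner w (s - p) \<le> 0" and v: "v \<in> span S"
  shows "0 \<le> inner w p" and "inner w v \<le> norm v / r * inner w p"
proof -
  show wp: "0 \<le> inner w p"
    using normal[OF contains_span_ball_zero[OF S(1)]] S(2) by simp
  show "inner w v \<le> norm v / r * inner w p"
  proof (cases "v = 0")
    case True
    then show ?thesis using wp by simp
  next
    case False
    have "(r / norm v) *\<^sub>R v \<in> S"
      using S(2) v False by (intro contains_span_ballD[OF S(1)]) (auto simp: span_scale)
    from normal[OF this] have "r / norm v * inner w v \<le> inner w p"
      by (simp add: inner_diff_right)
    then show ?thesis using False S(2) by (simp add: field_simps)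
  qed
qed

lemma closest_point_norm_le:
  fixes S :: "'a::euclidean_space set"
  assumes "closed S" "convex S" "0 \<in> S"
  shows "norm (closest_point S x) \<le> norm x"
proof -
  have "S \<noteq> {}" using assms(3) by blast
  then show ?thesis
    using closest_point_lipschitz[OF assms(2,1), of x 0] closest_point_self[OF assms(3)]
    by (simp add: dist_norm)
qed

(* Linear regularity: for a \<in> A, b \<in> B, split a - b = p + q and move a, b towards 0 so that the
   points (1 - \<mu>)(a - p) = (1 - \<mu>)(b + q) coincide, with \<mu> proportional to |a - b|. *)
lemma near_intersection_point:
  fixes A B :: "'a::euclidean_space set"
  assumes cvx: "convex A" "convex B"
    and ball: "contains_span_ball r A" "contains_span_ball r B" and r: "r > 0"
    and K: "bounded_splitting A B K"
    and ab: "a \<in> A" "b \<in> B" and na: "norm a \<le> \<rho>"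
  shows "\<exists>z\<in>A \<inter> B. norm (a - z) \<le> K * norm (a - b) * (\<rho> / r + 1)"
proof -
  define e where "e = a - b"
  have Kpos: "K > 0" using K unfolding bounded_splitting_def by simp
  show ?thesis
  proof (cases "r \<le> K * norm e")
    case True
    have "norm (a - 0) \<le> \<rho> * (K * norm e / r)"
      using na True r mult_left_mono[of 1 "K * norm e / r" \<rho>] norm_ge_zero[of a] by simp
    also have "\<dots> \<le> K * norm e * (\<rho> / r + 1)"
      using Kpos by (simp add: field_simps)
    finally show ?thesis
      using contains_span_ball_zero[OF ball(1)] contains_span_ball_zero[OF ball(2)] r
      unfolding e_def by fastforce
  next
    case False
    define \<mu> where "\<mu> = K * norm e / r"
    have \<mu>: "0 \<le> \<mu>" "\<mu> < 1" "K * norm e = \<mu> * r"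
      using False Kpos r by (auto simp: \<mu>_def)
    have "e \<in> span (A \<union> B)"
      unfolding e_def using ab by (auto intro: span_diff span_base)
    then obtain p q where pq: "p \<in> span A" "q \<in> span B" "e = p + q"
      "norm p \<le> \<mu> * r" "norm q \<le> \<mu> * r"
      using K \<mu>(3) unfolding bounded_splitting_def by metis
    define z where "z = (1 - \<mu>) *\<^sub>R (a - p)"
    have small: "norm ((1 - \<mu>) *\<^sub>R v) \<le> \<mu> * r" if "norm v \<le> \<mu> * r" for v :: 'a
      using that \<mu> mult_mono[of "1 - \<mu>" 1 "norm v" "\<mu> * r"] r by simp
    have "(1 - \<mu>) *\<^sub>R a + (- (1 - \<mu>) *\<^sub>R p) \<in> A"
      using \<mu> pq(1,4) small[of "-p"]
      by (intro convex_span_ball_shift[OF cvx(1) ball(1) r ab(1)]) (auto simp: span_scale)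
    moreover have "(1 - \<mu>) *\<^sub>R b + (1 - \<mu>) *\<^sub>R q \<in> B"
      using \<mu> pq(2,5) small[of q]
      by (intro convex_span_ball_shift[OF cvx(2) ball(2) r ab(2)]) (auto simp: span_scale)
    moreover have "a - p = b + q" using pq(3) by (simp add: e_def algebra_simps)
    ultimately have zAB: "z \<in> A \<inter> B"
      unfolding z_def by (auto simp: algebra_simps)
    have "norm (a - z) = norm (\<mu> *\<^sub>R a + (1 - \<mu>) *\<^sub>R p)"
      by (simp add: z_def algebra_simps)
    also have "\<dots> \<le> \<mu> * \<rho> + norm p"
      using norm_triangle_ineq[of "\<mu> *\<^sub>R a" "(1 - \<mu>) *\<^sub>R p"] \<mu> na
        mult_left_mono[OF na, of \<mu>] mult_right_mono[of "1 - \<mu>" 1 "norm p"] by auto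
    also have "\<dots> \<le> K * norm e * (\<rho> / r + 1)"
      using pq(4) \<mu>(3) r by (simp add: field_simps)
    finally show ?thesis using zAB unfolding e_def by blast
  qed
qed

(* Splitting u = uA + uB and testing the normal cones with span-ball points bounds
   |u|^2 by |u| times a multiple of |e|. *)
lemma normal_pair_bound:
  fixes A B :: "'a::euclidean_space set"
  assumes ball: "contains_span_ball r A" "contains_span_ball r B" and r: "r > 0"
    and K: "bounded_splitting A B K"
    and ab: "a \<in> A" "b \<in> B" and u: "u \<in> span (A \<union> B)"
    and normalA: "\<And>s. s \<in> A \<Longrightarrow> inner u (s - a) \<le> 0"
    and normalB: "\<And>s. s \<in> B \<Longrightarrow> inner (a - b - u) (s - b) \<le> 0"
  shows "norm u \<le> K * norm (a - b) * ((norm u + norm b) / r + 1)"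
proof -
  define e where "e = a - b"
  have normalB': "inner (e - u) (s - b) \<le> 0" if "s \<in> B" for s
    using normalB[OF that] by (simp add: e_def)
  have Kpos: "K > 0" using K unfolding bounded_splitting_def by simp
  obtain uA uB where uAB: "uA \<in> span A" "uB \<in> span B" "u = uA + uB"
    "norm uA \<le> K * norm u" "norm uB \<le> K * norm u"
    using K u unfolding bounded_splitting_def by metis
  have "inner u uA \<le> norm uA / r * inner u a"
    using normal_cone_span_bound(2)[OF ball(1) r ab(1) normalA uAB(1)] .
  also have "\<dots> \<le> K * norm u / r * inner u a"
    using normal_cone_span_bound(1)[OF ball(1) r ab(1) normalA uAB(1)] uAB(4) r
    by (intro mult_right_mono divide_right_mono) auto
  finally have bound_uA: "inner u uA \<le> K * norm u / r * inner u a" .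
  have "inner (e - u) (- uB) \<le> norm (- uB) / r * inner (e - u) b"
    using normal_cone_span_bound(2)[OF ball(2) r ab(2) normalB' span_neg[OF uAB(2)]] .
  also have "\<dots> \<le> K * norm u / r * inner (e - u) b"
    using normal_cone_span_bound(1)[OF ball(2) r ab(2) normalB' uAB(2)] uAB(5) r
    by (intro mult_right_mono divide_right_mono) auto
  finally have bound_uB: "inner (u - e) uB \<le> K * norm u / r * inner (e - u) b"
    by (simp add: inner_diff_left)
  have "inner u a + inner (e - u) b = inner u e + inner e b"
    by (simp add: e_def inner_diff_right inner_diff_left inner_commute)
  also have "\<dots> \<le> norm e * (norm u + norm b)"
    using Cauchy_Schwarz_ineq2[of u e] Cauchy_Schwarz_ineq2[of e b] by (simp add: algebra_simps)
  finally have sum: "inner u a + inner (e - u) b \<le> norm e * (norm u + norm b)" .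
  have "norm u ^ 2 = inner u uA + inner u uB"
    by (metis inner_add_right power2_norm_eq_inner uAB(3))
  also have "\<dots> = inner u uA + inner (u - e) uB + inner e uB"
    by (simp add: inner_diff_left)
  also have "\<dots> \<le> K * norm u / r * (inner u a + inner (e - u) b) + norm e * (K * norm u)"
  proof -
    have "inner e uB \<le> norm e * (K * norm u)"
      using Cauchy_Schwarz_ineq2[of e uB] mult_left_mono[OF uAB(5), of "norm e"] by simp
    then show ?thesis
      using bound_uA bound_uB distrib_left[of "K * norm u / r" "inner u a" "inner (e - u) b"]
      by linarith
  qed
  also have "\<dots> \<le> K * norm u / r * (norm e * (norm u + norm b)) + norm e * (K * norm u)"
    using sum Kpos r by (intro add_right_mono mult_left_mono) auto
  also have "\<dots> = norm u * (K * norm e * ((norm u + norm b) / r + 1))"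
    using r by (simp add: field_simps)
  finally have "norm u * norm u \<le> norm u * (K * norm e * ((norm u + norm b) / r + 1))"
    by (simp add: power2_eq_square)
  moreover have "0 \<le> K * norm e * ((norm u + norm b) / r + 1)"
    using Kpos r by simp
  ultimately show ?thesis
    unfolding e_def by (cases "norm u = 0") (simp_all add: mult_le_cancel_left_pos)
qed

(* For a = P_A x and b = P_B (R_A x), the step x - a is normal to A at a and
   R_A x - b = (a - b) - (x - a) is normal to B at b; bounding |x - a| and |b| by the size of x
   turns normal_pair_bound into |x - a| \<le> C |a - b|. *)
lemma distance_to_first_set_bound:
  fixes A B :: "'a::euclidean_space set"
  assumes cA: "closed A" "convex A" and cB: "closed B" "convex B"
    and ball: "contains_span_ball r A" "contains_span_ball r B" and r: "r > 0"
    and K: "bounded_splitting A B K"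
    and x: "x \<in> span (A \<union> B)" "norm x \<le> \<rho>"
  defines "a \<equiv> closest_point A x" and "b \<equiv> closest_point B (reflector A x)"
  shows "norm (x - a) \<le> K * norm (a - b) * (5 * \<rho> / r + 1)"
proof -
  have A0: "0 \<in> A" and B0: "0 \<in> B"
    using contains_span_ball_zero[OF ball(1)] contains_span_ball_zero[OF ball(2)] r by auto
  have aA: "a \<in> A" and bB: "b \<in> B"
    unfolding a_def b_def using closest_point_in_set cA(1) cB(1) A0 B0 by blast+
  have na: "norm a \<le> \<rho>"
    using closest_point_norm_le[OF cA A0, of x] x(2) by (simp add: a_def)
  have "norm b \<le> norm (2 *\<^sub>R a - x)"
    using closest_point_norm_le[OF cB B0] by (simp add: b_def reflector_def a_def)
  also have "\<dots> \<le> 3 * \<rho>"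
    using norm_triangle_ineq4[of "2 *\<^sub>R a" x] na x(2) by simp
  finally have nb: "norm b \<le> 3 * \<rho>" .
  have nu: "norm (x - a) \<le> 2 * \<rho>"
    using norm_triangle_ineq4[of x a] na x(2) by simp
  have normalA: "inner (x - a) (s - a) \<le> 0" if "s \<in> A" for s
    using closest_point_dot[OF cA(2,1) that] by (simp add: a_def)
  have normalB: "inner (a - b - (x - a)) (s - b) \<le> 0" if "s \<in> B" for s
  proof -
    have "reflector A x - b = a - b - (x - a)"
      by (simp add: reflector_def a_def algebra_simps scaleR_2)
    moreover have "inner (reflector A x - b) (s - b) \<le> 0"
      unfolding b_def by (rule closest_point_dot[OF cB(2,1) that])
    ultimately show ?thesis by (simp only:)
  qed
  have "x - a \<in> span (A \<union> B)"
    using x(1) aA by (auto intro: span_diff span_base)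
  then have "norm (x - a) \<le> K * norm (a - b) * ((norm (x - a) + norm b) / r + 1)"
    using normal_pair_bound[OF ball r K aA bB _ normalA normalB] by blast
  also have "\<dots> \<le> K * norm (a - b) * (5 * \<rho> / r + 1)"
    using nu nb r K unfolding bounded_splitting_def
    by (intro mult_left_mono add_right_mono divide_right_mono) auto
  finally show ?thesis .
qed

(* The theorem for sets centred at a common relative interior point 0:
   d(x, A \<inter> B) \<le> |x - a| + |a - z| \<le> C |a - b| = C |x - T x|. *)
lemma centered_error_bound:
  fixes A B :: "'a::euclidean_space set"
  assumes cA: "closed A" "convex A" and cB: "closed B" "convex B"
    and ball: "contains_span_ball r A" "contains_span_ball r B" and r: "r > 0"
    and \<rho>: "\<rho> > 0"
  shows "\<exists>\<kappa>>0. \<forall>x\<in>span (A \<union> B). norm x \<le> \<rho> \<longrightarrow> \<kappa> * infdist x (A \<inter> B) \<le> norm (x - drT A B x)"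
proof -
  obtain K where K: "bounded_splitting A B K"
    using bounded_splitting_exists by blast
  define C where "C = K * (6 * \<rho> / r + 2)"
  have C: "C > 0"
    using K r \<rho> unfolding bounded_splitting_def C_def by (simp add: add_pos_nonneg)
  have "infdist x (A \<inter> B) \<le> C * norm (x - drT A B x)"
    if x: "x \<in> span (A \<union> B)" "norm x \<le> \<rho>" for x
  proof -
    define a where "a = closest_point A x"
    define b where "b = closest_point B (reflector A x)"
    have A0: "0 \<in> A" and B0: "0 \<in> B"
      using contains_span_ball_zero[OF ball(1)] contains_span_ball_zero[OF ball(2)] r by auto
    have aA: "a \<in> A" and bB: "b \<in> B"
      unfolding a_def b_def using closest_point_in_set cA(1) cB(1) A0 B0 by blast+
    have gap: "norm (x - drT A B x) = norm (a - b)"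
      unfolding drT_def a_def b_def by (simp add: algebra_simps)
    have "norm a \<le> \<rho>"
      using closest_point_norm_le[OF cA A0, of x] x(2) by (simp add: a_def)
    then obtain z where z: "z \<in> A \<inter> B" "norm (a - z) \<le> K * norm (a - b) * (\<rho> / r + 1)"
      using near_intersection_point[OF cA(2) cB(2) ball r K aA bB] by blast
    have "infdist x (A \<inter> B) \<le> norm ((x - a) + (a - z))"
      using infdist_le[OF z(1), of x] by (simp add: dist_norm)
    also have "\<dots> \<le> norm (x - a) + norm (a - z)"
      by (rule norm_triangle_ineq)
    also have "\<dots> \<le> K * norm (a - b) * (5 * \<rho> / r + 1) + K * norm (a - b) * (\<rho> / r + 1)"
      using distance_to_first_set_bound[OF cA cB ball r K x] z(2) by (simp add: a_def b_def)
    also have "\<dots> = C * norm (x - drT A B x)"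
      unfolding gap C_def using r by (simp add: field_simps)
    finally show ?thesis .
  qed
  then show ?thesis
    using C by (intro exI[of _ "1 / C"]) (auto simp: field_simps)
qed

lemma closest_point_translation:
  fixes S :: "'a::euclidean_space set"
  assumes "closed S" "convex S" "S \<noteq> {}"
  shows "closest_point ((+) v ` S) (v + x) = v + closest_point S x"
proof (rule closest_point_unique[symmetric])
  show "convex ((+) v ` S)" "closed ((+) v ` S)"
    using assms by (simp_all add: convex_translation closed_translation)
  show "v + closest_point S x \<in> (+) v ` S"
    using closest_point_in_set[OF assms(1,3)] by auto
  show "\<forall>z\<in>(+) v ` S. dist (v + x) (v + closest_point S x) \<le> dist (v + x) z"
    using closest_point_le[OF assms(1)] by (auto simp: dist_add_cancel)
qed

lemma translation_invariance:
  fixes A B :: "'a::euclidean_space set"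
  assumes "closed A" "convex A" "A \<noteq> {}" "closed B" "convex B" "B \<noteq> {}"
  shows "norm ((v + x) - drT ((+) v ` A) ((+) v ` B) (v + x)) = norm (x - drT A B x)"
    and "infdist (v + x) ((+) v ` A \<inter> (+) v ` B) = infdist x (A \<inter> B)"
proof -
  have "reflector ((+) v ` A) (v + x) = v + reflector A x"
    unfolding reflector_def closest_point_translation[OF assms(1-3)] by (simp add: algebra_simps scaleR_2)
  then have "drT ((+) v ` A) ((+) v ` B) (v + x) = v + drT A B x"
    unfolding drT_def closest_point_translation[OF assms(1-3)]
    using closest_point_translation[OF assms(4-6), of v "reflector A x"]
    by (simp only:) (simp add: algebra_simps)
  then show "norm ((v + x) - drT ((+) v ` A) ((+) v ` B) (v + x)) = norm (x - drT A B x)"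
    by simp
  have "(+) v ` A \<inter> (+) v ` B = (+) v ` (A \<inter> B)" by auto
  then show "infdist (v + x) ((+) v ` A \<inter> (+) v ` B) = infdist x (A \<inter> B)"
    by (simp add: infdist_def image_image dist_add_cancel)
qed

lemma span_translate_to_point:
  fixes S :: "'a::euclidean_space set"
  assumes "c \<in> S"
  shows "span ((+) (-c) ` S) = (+) (-c) ` (affine hull S)"
proof -
  have "0 \<in> (+) (-c) ` S" using assms by force
  then have "affine hull ((+) (-c) ` S) = span ((+) (-c) ` S)"
    by (intro affine_hull_span_0 hull_inc)
  then show ?thesis using affine_hull_translation[of "-c" S] by simp
qed

lemma rel_interior_span_ball:
  fixes S :: "'a::euclidean_space set"
  assumes "c \<in> rel_interior S"
  shows "\<exists>r>0. contains_span_ball r ((+) (-c) ` S)"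
proof -
  obtain e where e: "e > 0" "ball c e \<inter> affine hull S \<subseteq> S"
    using assms mem_rel_interior_ball by blast
  have "s \<in> (+) (-c) ` S" if "s \<in> span ((+) (-c) ` S)" "norm s \<le> e / 2" for s
  proof -
    have "c + s \<in> affine hull S"
      using that(1) span_translate_to_point[OF rel_interior_subset[THEN subsetD, OF assms]] by auto
    moreover have "c + s \<in> ball c e" using that(2) e(1) by (simp add: dist_norm)
    ultimately have "c + s \<in> S" using e(2) by blast
    then show ?thesis by (auto intro: image_eqI[of _ _ "c + s"])
  qed
  then show ?thesis
    using e(1) unfolding contains_span_ball_def by (intro exI[of _ "e / 2"]) auto
qed

lemma common_rel_interior_span_ball:
  fixes A B :: "'a::euclidean_space set"
  assumes "c \<in> rel_interior A" "c \<in> rel_interior B"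
  shows "\<exists>r>0. contains_span_ball r ((+) (-c) ` A) \<and> contains_span_ball r ((+) (-c) ` B)"
proof -
  obtain rA rB where "rA > 0" "contains_span_ball rA ((+) (-c) ` A)"
    and "rB > 0" "contains_span_ball rB ((+) (-c) ` B)"
    using rel_interior_span_ball assms by metis
  then show ?thesis
    using contains_span_ball_mono[of rA _ "min rA rB"] contains_span_ball_mono[of rB _ "min rA rB"]
    by (intro exI[of _ "min rA rB"]) auto
qed

(* Main theorem: move a common relative interior point c to the origin, apply
   centered_error_bound with radius \<rho> + |c|, and translate back. *)
theorem lemma4p3:
  fixes A B :: "'a::euclidean_space set"
  assumes "closed A" "convex A" "closed B" "convex B"
    and "rel_interior A \<inter> rel_interior B \<noteq> {}"
  shows "\<forall>\<rho>>0. \<exists>\<kappa>>0. \<forall>x \<in> affine hull (A \<union> B). norm x \<le> \<rho> \<longrightarrow>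
           norm (x - drT A B x) \<ge> \<kappa> * infdist x (A \<inter> B)"
proof (intro allI impI)
  fix \<rho> :: real assume \<rho>: "\<rho> > 0"
  obtain c where c: "c \<in> rel_interior A" "c \<in> rel_interior B" using assms(5) by blast
  then have cAB: "c \<in> A" "c \<in> B" using rel_interior_subset by auto
  define A' B' where "A' = (+) (-c) ` A" and "B' = (+) (-c) ` B"
  obtain r where r: "r > 0" "contains_span_ball r A'" "contains_span_ball r B'"
    using common_rel_interior_span_ball[OF c] unfolding A'_def B'_def by blast
  have "closed A'" "convex A'" "closed B'" "convex B'"
    unfolding A'_def B'_def
    using closed_translation assms(1,3) convex_translation assms(2,4) by blast+
  then obtain \<kappa> where \<kappa>: "\<kappa> > 0" "\<forall>y\<in>span (A' \<union> B'). norm y \<le> \<rho> + norm c \<longrightarrow>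
      \<kappa> * infdist y (A' \<inter> B') \<le> norm (y - drT A' B' y)"
    using centered_error_bound[OF _ _ _ _ r(2,3,1)] \<rho> by (metis add_pos_nonneg norm_ge_zero)
  have span: "span (A' \<union> B') = (+) (-c) ` (affine hull (A \<union> B))"
    using span_translate_to_point[of c "A \<union> B"] cAB unfolding A'_def B'_def by (simp add: image_Un)
  show "\<exists>\<kappa>>0. \<forall>x \<in> affine hull (A \<union> B). norm x \<le> \<rho> \<longrightarrow> norm (x - drT A B x) \<ge> \<kappa> * infdist x (A \<inter> B)"
  proof (intro exI[of _ \<kappa>] conjI ballI impI)
    fix x assume x: "x \<in> affine hull (A \<union> B)" "norm x \<le> \<rho>"
    have "-c + x \<in> span (A' \<union> B')" using span x(1) by blast
    moreover have "norm (-c + x) \<le> \<rho> + norm c" using norm_triangle_ineq[of "-c" x] x(2) by simp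
    ultimately have "\<kappa> * infdist (-c + x) (A' \<inter> B') \<le> norm ((-c + x) - drT A' B' (-c + x))"
      using \<kappa>(2) by blast
    moreover have "A \<noteq> {}" "B \<noteq> {}" using cAB by auto
    ultimately show "norm (x - drT A B x) \<ge> \<kappa> * infdist x (A \<inter> B)"
      using translation_invariance[OF assms(1,2) _ assms(3,4), of "-c" x]
      unfolding A'_def B'_def by simp
  qed (fact \<kappa>(1))
qed
end
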